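(* Let $S$ be an infinite subset of $\mathbb C^2$ and suppose there exist constants $A\ge1$ and $0<\alpha<2$ such that $|S\cap X|\le A(\deg X)^\alpha$ for every algebraic curve $X\subset\mathbb C^2$ not containing $S$. Then $\alpha\ge1$ and $S$ is contained in an irreducible algebraic curve of degree at most $(2A)^{1/(2-\alpha)}$. Moreover, $|S\cap X|\le(2A)^{1/(2-\alpha)}\deg X$ for every algebraic curve $X\subset\mathbb C^2$ not containing $S$. *)

theory Defs
  imports Complex_Main "HOL-Computational_Algebra.Polynomial_Factorial"
begin

text \<open>Bivariate complex polynomials are represented as C[x][y] = complex poly poly:
  P = sum_j (coeff P j)(x) * y^j.\<close>

definition eval2 :: "complex poly poly \<Rightarrow> complex \<times> complex \<Rightarrow> complex" where
  "eval2 P z = poly (map_poly (\<lambda>c. poly c (fst z)) P) (snd z)"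

definition total_degree :: "complex poly poly \<Rightarrow> nat" where
  "total_degree P = (if P = 0 then 0
     else Max {degree (coeff P j) + j | j. coeff P j \<noteq> 0})"

definition zero_set :: "complex poly poly \<Rightarrow> (complex \<times> complex) set" where
  "zero_set P = {z. eval2 P z = 0}"

definition algebraic_curve :: "(complex \<times> complex) set \<Rightarrow> bool" where
  "algebraic_curve X \<longleftrightarrow> (\<exists>P. total_degree P \<ge> 1 \<and> X = zero_set P)"

definition curve_degree :: "(complex \<times> complex) set \<Rightarrow> nat" where
  "curve_degree X = (LEAST d. \<exists>P. total_degree P = d \<and> total_degree P \<ge> 1 \<and> X = zero_set P)"

definition irreducible_curve :: "(complex \<times> complex) set \<Rightarrow> bool" where
  "irreducible_curve X \<longleftrightarrow> (\<exists>P. irreducible P \<and> total_degree P \<ge> 1 \<and> X = zero_set P)"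

end

theory Submission
  imports Defs "HOL-Computational_Algebra.Field_as_Ring"
begin

text \<open>Write \<open>V(k)\<close> for the polynomials of total degree at most \<open>k\<close>; the monomials form a
  basis, so \<open>N(k) = dim V(k) = (k+1)(k+2)/2\<close>. Hence any \<open>N(k) - 1\<close> points lie on a curve of
  degree at most \<open>k\<close>, and once \<open>A k\<^sup>\<alpha> < N(k) - 1\<close> that curve must contain all of \<open>S\<close>.
  A curve of least degree \<open>e\<close> through \<open>S\<close> is irreducible, since otherwise \<open>S\<close> would be covered
  by two curves each meeting \<open>S\<close> in finitely many points, and the same count with \<open>k = e - 1\<close>
  gives \<open>e\<^sup>2 \<le> 2 A e\<^sup>\<alpha>\<close>. A curve of degree \<open>d\<close> not containing \<open>S\<close> meets this irreducible
  curve in at most \<open>d e\<close> points, by a dimension count proof of Bezout's bound: if \<open>P\<close> is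
  irreducible and does not divide \<open>Q\<close>, and \<open>R\<close> is a complement of \<open>P V(m)\<close> in \<open>V(e+m)\<close>, then
  \<open>P V(d+m)\<close> and \<open>Q R\<close> are independent subspaces, of dimensions \<open>N(d+m)\<close> and
  \<open>N(e+m) - N(m)\<close>, of the polynomials in \<open>V(d+e+m)\<close> vanishing on \<open>m\<close> common zeros, a space of
  dimension \<open>N(d+e+m) - m\<close>; comparing dimensions gives \<open>m \<le> d e\<close>. Finally \<open>\<alpha> \<ge> 1\<close>, because
  \<open>d\<close> parallel lines through points of \<open>S\<close> meet \<open>S\<close> in at least \<open>d\<close> points.\<close>

lemma finite_degree_sums: "finite {degree (coeff P j) + j | j. coeff P j \<noteq> 0}"
proof -
  have "{degree (coeff P j) + j | j. coeff P j \<noteq> 0} \<subseteq> (\<lambda>j. degree (coeff P j) + j) ` {..degree P}"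
    using le_degree by fastforce
  then show ?thesis
    by (rule finite_subset) simp
qed

lemma degree_sums_nonempty: "P \<noteq> 0 \<Longrightarrow> {degree (coeff P j) + j | j. coeff P j \<noteq> 0} \<noteq> {}"
  by (auto intro!: exI[of _ "degree P"])

lemma total_degree_le_iff:
  "total_degree P \<le> n \<longleftrightarrow> (\<forall>j. coeff P j \<noteq> 0 \<longrightarrow> degree (coeff P j) + j \<le> n)"
  using finite_degree_sums[of P] degree_sums_nonempty[of P]
  by (cases "P = 0") (auto simp: total_degree_def Max_le_iff)

lemma degree_coeff_le_total_degree: "coeff P j \<noteq> 0 \<Longrightarrow> degree (coeff P j) + j \<le> total_degree P"
  using total_degree_le_iff[of P "total_degree P"] by auto

lemma total_degree_attained:
  assumes "P \<noteq> 0"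
  obtains j where "coeff P j \<noteq> 0" "degree (coeff P j) + j = total_degree P"
proof -
  let ?M = "{degree (coeff P j) + j | j. coeff P j \<noteq> 0}"
  have "Max ?M \<in> ?M"
    by (rule Max_in[OF finite_degree_sums degree_sums_nonempty[OF assms]])
  moreover have "total_degree P = Max ?M"
    using assms by (simp add: total_degree_def)
  ultimately show ?thesis
    using that by auto
qed

lemma total_degree_0 [simp]: "total_degree 0 = 0"
  by (simp add: total_degree_def)

lemma eval2_Pair: "eval2 P (a, b) = poly (poly P [:b:]) a"
  unfolding eval2_def by (induction P rule: pCons_induct) (auto simp: map_poly_pCons)

lemma eval2_0 [simp]: "eval2 0 z = 0"
  by (cases z) (simp add: eval2_Pair)

lemma eval2_const [simp]: "eval2 [:[:c:]:] z = c"
  by (cases z) (simp add: eval2_Pair)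

lemma eval2_add [simp]: "eval2 (P + Q) z = eval2 P z + eval2 Q z"
  by (cases z) (simp add: eval2_Pair)

lemma eval2_mult [simp]: "eval2 (P * Q) z = eval2 P z * eval2 Q z"
  by (cases z) (simp add: eval2_Pair)

lemma eval2_smult [simp]: "eval2 (smult [:c:] P) z = c * eval2 P z"
  by (cases z) (simp add: eval2_Pair)

lemma eval2_prod: "eval2 (prod f F) z = (\<Prod>a\<in>F. eval2 (f a) z)"
  by (cases z) (simp add: eval2_Pair poly_prod)

section \<open>Multiplicativity of the total degree\<close>

text \<open>\<^term>\<open>poly P [:0, c:]\<close> is the restriction \<open>P(x, c x)\<close> of \<open>P\<close> to the line \<open>y = c x\<close>.
  Its coefficient of \<open>x\<^sup>t\<close>, as a polynomial in the slope \<open>c\<close>, is the degree-\<open>t\<close> homogeneous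
  part of \<open>P\<close> dehomogenised at \<open>x = 1\<close>. The top part is nonzero, so for all but finitely many
  slopes the restriction has degree \<^term>\<open>total_degree P\<close>, which makes the total degree
  multiplicative.\<close>

lemma degree_poly_line_le: "degree (poly P [:0, c:]) \<le> total_degree P"
proof -
  have "degree (coeff P i * [:0, c:] ^ i) \<le> total_degree P" for i
  proof (cases "coeff P i = 0")
    case False
    have "degree ([:0, c:] ^ i) \<le> i"
      using degree_power_le[of "[:0, c:]" i] by (simp split: if_splits)
    then have "degree (coeff P i * [:0, c:] ^ i) \<le> degree (coeff P i) + i"
      using degree_mult_le[of "coeff P i" "[:0, c:] ^ i"] by linarith
    then show ?thesis
      using degree_coeff_le_total_degree[OF False] by linarith
  qed simp
  then show ?thesis
    unfolding poly_altdef by (intro degree_sum_le) auto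
qed

definition homogeneous_component :: "complex poly poly \<Rightarrow> nat \<Rightarrow> complex poly" where
  "homogeneous_component P t =
     (\<Sum>i\<le>degree P. monom (if i \<le> t then coeff (coeff P i) (t - i) else 0) i)"

lemma coeff_poly_line: "coeff (poly P [:0, c:]) t = poly (homogeneous_component P t) c"
proof -
  have "[:0, c:] = monom c 1"
    by (simp add: monom_Suc monom_0)
  then have "poly P [:0, c:] = (\<Sum>i\<le>degree P. monom (c ^ i) i * coeff P i)"
    by (simp add: poly_altdef monom_power mult.commute)
  then have "coeff (poly P [:0, c:]) t =
      (\<Sum>i\<le>degree P. if t < i then 0 else c ^ i * coeff (coeff P i) (t - i))"
    by (simp add: coeff_sum coeff_monom_mult)
  also have "\<dots> = poly (homogeneous_component P t) c"
    unfolding homogeneous_component_def poly_sum by (intro sum.cong) (auto simp: poly_monom)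
  finally show ?thesis .
qed

lemma homogeneous_component_total_degree_nonzero:
  assumes "P \<noteq> 0"
  shows "homogeneous_component P (total_degree P) \<noteq> 0"
proof -
  obtain j where j: "coeff P j \<noteq> 0" "degree (coeff P j) + j = total_degree P"
    using total_degree_attained[OF assms] .
  have "j \<le> degree P"
    using j(1) le_degree by blast
  have "total_degree P - j = degree (coeff P j)"
    using j(2) by linarith
  then have "coeff (homogeneous_component P (total_degree P)) j =
      (\<Sum>i\<le>degree P. if i = j then lead_coeff (coeff P j) else 0)"
    unfolding homogeneous_component_def coeff_sum using j(2)
    by (intro sum.cong) (auto simp: coeff_monom)
  also have "\<dots> = lead_coeff (coeff P j)"
    using \<open>j \<le> degree P\<close> by simp
  finally show ?thesis
    using j(1) by (metis coeff_0 leading_coeff_0_iff)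
qed

lemma finite_slopes_degree_drop:
  assumes "P \<noteq> 0"
  shows "finite {c. coeff (poly P [:0, c:]) (total_degree P) = 0}"
  using poly_roots_finite[OF homogeneous_component_total_degree_nonzero[OF assms]]
  by (simp add: coeff_poly_line)

lemma degree_poly_line_eq:
  assumes "coeff (poly P [:0, c:]) (total_degree P) \<noteq> 0"
  shows "poly P [:0, c:] \<noteq> 0" "degree (poly P [:0, c:]) = total_degree P"
  using assms degree_poly_line_le[of P c] le_degree[OF assms] by auto

lemma total_degree_mult:
  assumes "P \<noteq> 0" "Q \<noteq> 0"
  shows "total_degree (P * Q) = total_degree P + total_degree Q"
proof -
  let ?D = "\<lambda>R. {c. coeff (poly R [:0, c:]) (total_degree R) = 0}"
  have "finite (?D P \<union> ?D Q \<union> ?D (P * Q))"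
    using assms by (simp add: finite_slopes_degree_drop del: poly_mult)
  then obtain c where "c \<notin> ?D P \<union> ?D Q \<union> ?D (P * Q)"
    using ex_new_if_finite[OF infinite_UNIV_char_0] by meson
  then have P: "coeff (poly P [:0, c:]) (total_degree P) \<noteq> 0"
    and Q: "coeff (poly Q [:0, c:]) (total_degree Q) \<noteq> 0"
    and PQ: "coeff (poly (P * Q) [:0, c:]) (total_degree (P * Q)) \<noteq> 0"
    by blast+
  have "total_degree (P * Q) = degree (poly P [:0, c:] * poly Q [:0, c:])"
    using degree_poly_line_eq(2)[OF PQ] by simp
  also have "\<dots> = total_degree P + total_degree Q"
    using degree_poly_line_eq[OF P] degree_poly_line_eq[OF Q] by (simp add: degree_mult_eq)
  finally show ?thesis .
qed

lemma total_degree_mult_le: "total_degree (P * Q) \<le> total_degree P + total_degree Q"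
  by (cases "P = 0 \<or> Q = 0") (auto simp: total_degree_mult)

lemma total_degree_add_le:
  assumes "total_degree P \<le> n" "total_degree Q \<le> n"
  shows "total_degree (P + Q) \<le> n"
  unfolding total_degree_le_iff
proof (intro allI impI)
  fix j
  assume "coeff (P + Q) j \<noteq> 0"
  moreover have "coeff P j \<noteq> 0 \<Longrightarrow> degree (coeff P j) + j \<le> n"
    and "coeff Q j \<noteq> 0 \<Longrightarrow> degree (coeff Q j) + j \<le> n"
    using assms by (auto simp: total_degree_le_iff)
  moreover have "degree (coeff P j + coeff Q j) \<le> max (degree (coeff P j)) (degree (coeff Q j))"
    by (rule degree_add_le_max)
  ultimately show "degree (coeff (P + Q) j) + j \<le> n"
    by (cases "coeff P j = 0"; cases "coeff Q j = 0") auto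
qed

lemma total_degree_smult_le: "total_degree (smult [:c:] P) \<le> total_degree P"
  unfolding total_degree_le_iff
proof (intro allI impI)
  fix j
  assume "coeff (smult [:c:] P) j \<noteq> 0"
  then have "coeff P j \<noteq> 0"
    by auto
  moreover have "degree (coeff (smult [:c:] P) j) \<le> degree (coeff P j)"
    by (simp add: degree_smult_le)
  ultimately show "degree (coeff (smult [:c:] P) j) + j \<le> total_degree P"
    using degree_coeff_le_total_degree by fastforce
qed

lemma total_degree_const [simp]: "total_degree [:[:c:]:] = 0"
  by (simp add: total_degree_le_iff[of _ 0, simplified] coeff_pCons split: nat.splits)

lemma total_degree_1 [simp]: "total_degree 1 = 0"
  by (metis one_pCons total_degree_const)

lemma total_degree_prod:
  assumes "finite F" "\<And>a. a \<in> F \<Longrightarrow> f a \<noteq> 0"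
  shows "total_degree (prod f F) = (\<Sum>a\<in>F. total_degree (f a))"
  using assms by (induction F rule: finite_induct) (auto simp: total_degree_mult)

lemma total_degree_eq_0_iff: "total_degree P = 0 \<longleftrightarrow> (\<exists>c. P = [:[:c:]:])"
proof
  assume "total_degree P = 0"
  then have "coeff P j = 0" if "j > 0" for j
    using that degree_coeff_le_total_degree[of P j] by fastforce
  moreover have "degree (coeff P 0) = 0"
    using \<open>total_degree P = 0\<close> degree_coeff_le_total_degree[of P 0] by fastforce
  ultimately have "P = [:[:coeff (coeff P 0) 0:]:]"
    by (auto simp: poly_eq_iff coeff_pCons coeff_eq_0 split: nat.splits)
  then show "\<exists>c. P = [:[:c:]:]" ..
qed auto

lemma total_degree_eq_0_iff_unit:
  assumes "P \<noteq> 0"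
  shows "total_degree P = 0 \<longleftrightarrow> is_unit P"
proof
  assume "total_degree P = 0"
  then obtain c where c: "P = [:[:c:]:]"
    using total_degree_eq_0_iff by blast
  then have "P * [:[:1 / c:]:] = 1"
    using assms by (simp add: one_pCons)
  then show "is_unit P"
    by (rule dvdI[OF sym])
next
  assume "is_unit P"
  then obtain Q where "1 = P * Q"
    by (rule dvdE)
  then have "total_degree 1 = total_degree P + total_degree Q"
    by (metis total_degree_mult mult_zero_left mult_zero_right one_neq_zero)
  then show "total_degree P = 0"
    by simp
qed

lemma total_degree_pos_if_root:
  assumes "P \<noteq> 0" "eval2 P z = 0"
  shows "1 \<le> total_degree P"
  using assms total_degree_eq_0_iff[of P] by (cases "total_degree P") auto

definition line_x :: "complex \<Rightarrow> complex poly poly" where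
  "line_x a = [:[:-a, 1:]:]"

definition line_y :: "complex \<Rightarrow> complex poly poly" where
  "line_y b = [:[:-b:], 1:]"

lemma eval2_line_x [simp]: "eval2 (line_x a) z = fst z - a"
  by (cases z) (simp add: eval2_Pair line_x_def)

lemma eval2_line_y [simp]: "eval2 (line_y b) z = snd z - b"
  by (cases z) (simp add: eval2_Pair line_y_def)

lemma total_degree_line_x [simp]: "total_degree (line_x a) = 1"
  using degree_coeff_le_total_degree[of "line_x a" 0]
  by (intro antisym) (auto simp: line_x_def total_degree_le_iff coeff_pCons split: nat.split)

lemma total_degree_line_y [simp]: "total_degree (line_y b) = 1"
  using degree_coeff_le_total_degree[of "line_y b" 1]
  by (intro antisym) (auto simp: line_y_def total_degree_le_iff coeff_pCons split: nat.split)

lemma ex_poly_vanishing_except: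
  assumes "finite T" "t \<notin> T"
  obtains L where "total_degree L = card T" "\<And>s. s \<in> T \<Longrightarrow> eval2 L s = 0" "eval2 L t \<noteq> 0"
proof -
  have "\<exists>l. total_degree l = 1 \<and> eval2 l s = 0 \<and> eval2 l t \<noteq> 0" if "s \<noteq> t" for s
  proof (cases "fst s = fst t")
    case True
    with that have "snd s \<noteq> snd t"
      by (simp add: prod_eq_iff)
    then show ?thesis
      by (intro exI[of _ "line_y (snd s)"]) simp
  next
    case False
    then show ?thesis
      by (intro exI[of _ "line_x (fst s)"]) simp
  qed
  then obtain l where l: "\<And>s. s \<in> T \<Longrightarrow> total_degree (l s) = 1 \<and> eval2 (l s) s = 0 \<and> eval2 (l s) t \<noteq> 0"
    using assms(2) by metis
  show ?thesis
  proof
    have "l s \<noteq> 0" if "s \<in> T" for s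
      using l[OF that] by auto
    then show "total_degree (\<Prod>s\<in>T. l s) = card T"
      using l assms(1) by (simp add: total_degree_prod)
    show "eval2 (\<Prod>s\<in>T. l s) s = 0" if "s \<in> T" for s
      using l[OF that] that assms(1) by (auto simp: eval2_prod prod_zero_iff intro!: bexI[of _ s])
    show "eval2 (\<Prod>s\<in>T. l s) t \<noteq> 0"
      using l assms(1) by (simp add: eval2_prod prod_zero_iff)
  qed
qed

lemma ex_lines_through_points:
  fixes \<pi> :: "complex \<times> complex \<Rightarrow> complex" and l :: "complex \<Rightarrow> complex poly poly"
  assumes "infinite (\<pi> ` S)"
    and "\<And>a. total_degree (l a) = 1" and "\<And>a z. eval2 (l a) z = \<pi> z - a"
  obtains P where "total_degree P = d" "\<not> S \<subseteq> zero_set P"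
    "finite (S \<inter> zero_set P) \<Longrightarrow> d \<le> card (S \<inter> zero_set P)"
proof -
  obtain F where F: "finite F" "card F = d" "F \<subseteq> \<pi> ` S"
    using infinite_arbitrarily_large[OF assms(1)] by blast
  define P where "P = (\<Prod>a\<in>F. l a)"
  have zero_set_P: "zero_set P = {z. \<pi> z \<in> F}"
    using F(1) assms(3) by (auto simp: P_def zero_set_def eval2_prod prod_zero_iff)
  show ?thesis
  proof (rule that)
    have "l a \<noteq> 0" for a
      using assms(2)[of a] by auto
    then show "total_degree P = d"
      using F assms(2) by (simp add: P_def total_degree_prod)
    show "\<not> S \<subseteq> zero_set P"
    proof
      assume "S \<subseteq> zero_set P"
      then have "\<pi> ` S \<subseteq> F"
        unfolding zero_set_P by blast
      then show False
        using assms(1) F(1) finite_subset by blast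
    qed
    assume fin: "finite (S \<inter> zero_set P)"
    have "F \<subseteq> \<pi> ` (S \<inter> zero_set P)"
      using F(3) unfolding zero_set_P by blast
    then have "card F \<le> card (\<pi> ` (S \<inter> zero_set P))"
      using fin by (intro card_mono) auto
    also have "\<dots> \<le> card (S \<inter> zero_set P)"
      using fin by (rule card_image_le)
    finally show "d \<le> card (S \<inter> zero_set P)"
      using F(2) by simp
  qed
qed

lemma ex_lines_through_points_infinite:
  assumes "infinite S"
  obtains P where "total_degree P = d" "\<not> S \<subseteq> zero_set P"
    "finite (S \<inter> zero_set P) \<Longrightarrow> d \<le> card (S \<inter> zero_set P)"
proof (cases "finite (fst ` S)")
  case True
  have "infinite (snd ` S)"
  proof
    assume "finite (snd ` S)"
    then have "finite (fst ` S \<times> snd ` S)"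
      using True by simp
    moreover have "S \<subseteq> fst ` S \<times> snd ` S"
      by force
    ultimately show False
      using assms finite_subset by blast
  qed
  from ex_lines_through_points[OF this total_degree_line_y eval2_line_y] that show ?thesis
    by blast
next
  case False
  from ex_lines_through_points[OF this total_degree_line_x eval2_line_x] that show ?thesis
    by blast
qed

section \<open>Independent sets and hyperplanes\<close>

context vector_space
begin

lemma independent_Un_if_span_Int:
  assumes "independent X" "independent Y" "span X \<inter> span Y = {0}"
  shows "independent (X \<union> Y)"
proof -
  have not_in_span: "v \<notin> span (U \<union> W - {v})"
    if U: "independent U" "v \<in> U" and UW: "span U \<inter> span W = {0}" for U W v
  proof
    assume v: "v \<in> span (U \<union> W - {v})"
    have "v \<notin> W"
    proof
      assume "v \<in> W"
      then have "v = 0"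
        using U(2) UW span_base by blast
      then show False
        using U dependent_zero by blast
    qed
    then have "U \<union> W - {v} = (U - {v}) \<union> W"
      by blast
    then obtain a b where ab: "v = a + b" "a \<in> span (U - {v})" "b \<in> span W"
      using v by (auto simp: span_Un)
    have "b = v - a"
      using ab(1) by simp
    also have "\<dots> \<in> span U"
      using ab(2) span_mono[of "U - {v}" U] U(2) by (auto intro: span_diff span_base)
    finally have "b = 0"
      using ab(3) UW by blast
    then have "v \<in> span (U - {v})"
      using ab by simp
    then show False
      using U unfolding dependent_def by blast
  qed
  have "v \<notin> span (X \<union> Y - {v})" if "v \<in> X \<union> Y" for v
  proof (cases "v \<in> X")
    case True
    then show ?thesis
      by (rule not_in_span[OF assms(1) _ assms(3)])
  next
    case False
    with that have "v \<in> Y"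
      by blast
    moreover have "span Y \<inter> span X = {0}"
      using assms(3) by blast
    ultimately show ?thesis
      using not_in_span[OF assms(2)] by (simp add: Un_commute)
  qed
  then show ?thesis
    unfolding dependent_def by blast
qed

lemma span_Int_span_Diff:
  assumes "independent B" "X \<subseteq> B"
  shows "span X \<inter> span (B - X) = {0}"
proof -
  interpret pair: vector_space_pair scale scale ..
  obtain g where g: "Vector_Spaces.linear scale scale g" "\<forall>b\<in>B. g b = (if b \<in> X then b else 0)"
    using pair.linear_independent_extend[of B "\<lambda>b. if b \<in> X then b else 0"] assms(1) by blast
  have "g v = v" if "v \<in> span X" for v
    by (rule pair.linear_eq_on_span[OF g(1) module_hom_ident _ that]) (use g(2) assms(2) in auto)
  moreover have "g v = 0" if "v \<in> span (B - X)" for v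
    by (rule pair.linear_eq_on_span[OF g(1) pair.linear_zero _ that]) (use g(2) in auto)
  ultimately have "v = 0" if "v \<in> span X \<inter> span (B - X)" for v
    using that by (metis IntD1 IntD2)
  then show ?thesis
    using span_zero by auto
qed

lemma ex_independent_in_kernel:
  fixes f :: "'b \<Rightarrow> 'a"
  assumes "finite B" "independent B"
    and f_add: "\<And>x y. f (x + y) = f x + f y" and f_scale: "\<And>c x. f (c *s x) = c * f x"
  obtains B' where "B' \<subseteq> span B" "independent B'" "card B \<le> card B' + 1" "\<And>b. b \<in> B' \<Longrightarrow> f b = 0"
proof (cases "\<exists>b0\<in>B. f b0 \<noteq> 0")
  case False
  then show ?thesis
    using that[of B] assms span_superset by auto
next
  case True
  then obtain b0 where b0: "b0 \<in> B" "f b0 \<noteq> 0"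
    by blast
  define g where "g v = v - (f v / f b0) *s b0" for v
  have f_g: "f (g v) = 0" for v
    using f_add[of "g v" "(f v / f b0) *s b0"] f_scale b0(2) by (simp add: g_def)
  interpret pair: vector_space_pair scale scale ..
  have "g (x + y) = g x + g y" for x y
    by (simp add: g_def f_add add_divide_distrib scale_left_distrib)
  moreover have "g (c *s x) = c *s g x" for c x
    by (simp add: g_def f_scale scale_right_diff_distrib)
  ultimately have lin: "Vector_Spaces.linear scale scale g"
    by (simp add: Vector_Spaces.linear_iff vector_space_axioms)
  have "inj_on g (span (B - {b0}))"
  proof (rule pair.linear_inj_on_iff_eq_0[OF lin subspace_span, THEN iffD2], intro ballI impI)
    fix v
    assume v: "v \<in> span (B - {b0})" "g v = 0"
    then have v_eq: "v = (f v / f b0) *s b0"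
      by (simp add: g_def)
    show "v = 0"
    proof (cases "f v = 0")
      case False
      have "b0 = (f b0 / f v) *s v"
        using False b0(2) by (subst v_eq) simp
      then have "b0 \<in> span (B - {b0})"
        using v(1) span_scale by metis
      then show ?thesis
        using assms(2) b0(1) unfolding dependent_def by blast
    qed (use v_eq in simp)
  qed
  then have inj: "inj_on g (B - {b0})"
    using span_superset inj_on_subset by blast
  show ?thesis
  proof (rule that[of "g ` (B - {b0})"])
    have "g v \<in> span B" if "v \<in> B" for v
      unfolding g_def using that b0(1) by (intro span_diff span_scale span_base)
    then show "g ` (B - {b0}) \<subseteq> span B"
      by blast
    show "independent (g ` (B - {b0}))"
      using pair.linear_independent_injective_image[OF lin, of "B - {b0}"] \<open>inj_on g (span (B - {b0}))\<close>
        independent_mono[OF assms(2)] by blast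
    show "card B \<le> card (g ` (B - {b0})) + 1"
      using card_image[OF inj] assms(1) b0(1) by (simp add: card_Diff_singleton)
  qed (auto simp: f_g)
qed

end

section \<open>Polynomials of bounded total degree\<close>

abbreviation bscale :: "complex \<Rightarrow> complex poly poly \<Rightarrow> complex poly poly" where
  "bscale c p \<equiv> smult [:c:] p"

interpretation bpoly: vector_space bscale
proof unfold_locales
  show "smult [:a + b:] x = smult [:a:] x + smult [:b:] x" for a b :: complex and x :: "complex poly poly"
    by (metis add_pCons add_0 smult_add_left)
qed (simp_all add: smult_add_right mult.commute flip: one_pCons)

lemma subspace_total_degree_le: "bpoly.subspace {p. total_degree p \<le> n}"
  unfolding bpoly.subspace_def
  using total_degree_add_le total_degree_smult_le order.trans by fastforce

lemma subspace_vanishing: "bpoly.subspace {p. \<forall>t\<in>T. eval2 p t = 0}"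
  unfolding bpoly.subspace_def by simp

lemma linear_mult_left: "Vector_Spaces.linear bscale bscale ((*) P)"
  unfolding Vector_Spaces.linear_iff
  using bpoly.vector_space_axioms by (simp add: distrib_left)

lemma span_image_mult: "bpoly.span ((*) P ` B) = (*) P ` bpoly.span B"
  using module_hom.span_image[OF linear_mult_left[unfolded module_hom_iff_linear[symmetric]]] .

lemma independent_image_mult:
  assumes "P \<noteq> 0" "bpoly.independent B"
  shows "bpoly.independent ((*) P ` B)"
  using module_hom.independent_injective_image[OF
      linear_mult_left[unfolded module_hom_iff_linear[symmetric]] assms(2)] assms(1)
  by (simp add: inj_on_def)

text \<open>\<^term>\<open>monom (monom 1 i) j\<close> is the monomial \<open>x\<^sup>i y\<^sup>j\<close>.\<close>

definition monomials :: "nat \<Rightarrow> complex poly poly set" where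
  "monomials n = (\<lambda>(i, j). monom (monom 1 i) j) ` {(i, j). i + j \<le> n}"

lemma finite_exponents: "finite {(i, j :: nat). i + j \<le> n}"
  by (rule finite_subset[of _ "{..n} \<times> {..n}"]) auto

lemma card_exponents: "2 * card {(i, j :: nat). i + j \<le> n} = (n + 1) * (n + 2)"
proof -
  have "bij_betw (\<lambda>(i, j). (i + j, i)) {(i, j). i + j \<le> n} (SIGMA k:{..n}. {..k})"
    by (rule bij_betw_byWitness[where f' = "\<lambda>(k, i). (i, k - i)"]) auto
  then have "card {(i, j). i + j \<le> n} = (\<Sum>k\<le>n. Suc k)"
    by (simp add: bij_betw_same_card)
  also have "2 * \<dots> = (n + 1) * (n + 2)"
    by (induction n) auto
  finally show ?thesis .
qed

lemma inj_monomial: "inj (\<lambda>(i, j). monom (monom (1 :: complex) i) j)"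
  by (auto simp: inj_def monom_eq_iff')

lemma card_monomials: "2 * card (monomials n) = (n + 1) * (n + 2)"
  unfolding monomials_def
  by (simp add: card_image inj_on_subset[OF inj_monomial] card_exponents)

lemma card_monomials_real: "2 * real (card (monomials n)) = (real n + 1) * (real n + 2)"
  using arg_cong[OF card_monomials[of n], of real] by (simp add: algebra_simps)

lemma finite_monomials: "finite (monomials n)"
  by (simp add: monomials_def finite_exponents)

lemma coeff_sum_monomials:
  assumes "finite E"
  shows "coeff (coeff (\<Sum>(i', j')\<in>E. monom (monom (a i' j') i') j') j) i =
    (if (i, j) \<in> E then a i j else 0)"
proof -
  have "coeff (coeff (\<Sum>(i', j')\<in>E. monom (monom (a i' j') i') j') j) i =
      (\<Sum>x\<in>E. if x = (i, j) then a i j else 0)"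
    by (auto simp: coeff_sum coeff_monom intro!: sum.cong)
  then show ?thesis
    using assms by simp
qed

lemma monomials_subset: "monomials n \<subseteq> {p. total_degree p \<le> n}"
  by (auto simp: monomials_def total_degree_le_iff coeff_monom degree_monom_eq split: if_splits)

lemma total_degree_le_expansion:
  assumes "total_degree p \<le> n"
  shows "p = (\<Sum>(i, j)\<in>{(i, j). i + j \<le> n}. monom (monom (coeff (coeff p j) i) i) j)"
proof (intro poly_eqI)
  fix i j
  have "coeff (coeff p j) i = 0" if "\<not> i + j \<le> n"
  proof (cases "coeff p j = 0")
    case False
    then have "degree (coeff p j) + j \<le> n"
      using assms by (simp add: total_degree_le_iff)
    with that show ?thesis
      by (intro coeff_eq_0) simp
  qed simp
  then show "coeff (coeff p j) i =
      coeff (coeff (\<Sum>(i, j)\<in>{(i, j). i + j \<le> n}. monom (monom (coeff (coeff p j) i) i) j) j) i"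
    by (simp add: coeff_sum_monomials finite_exponents)
qed

lemma span_monomials: "bpoly.span (monomials n) = {p. total_degree p \<le> n}"
proof (rule bpoly.span_subspace[OF monomials_subset _ subspace_total_degree_le], rule subsetI)
  fix p
  assume "p \<in> {p. total_degree p \<le> n}"
  then have "p = (\<Sum>(i, j)\<in>{(i, j). i + j \<le> n}. bscale (coeff (coeff p j) i) (monom (monom 1 i) j))"
    using total_degree_le_expansion[of p n] by (simp add: smult_monom)
  also have "\<dots> \<in> bpoly.span (monomials n)"
  proof -
    have "monom (monom 1 i) j \<in> bpoly.span (monomials n)" if "i + j \<le> n" for i j
      by (rule bpoly.span_base) (use that in \<open>auto simp: monomials_def\<close>)
    then show ?thesis
      by (auto intro!: bpoly.span_sum bpoly.span_scale)
  qed
  finally show "p \<in> bpoly.span (monomials n)" .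
qed

lemma independent_monomials: "bpoly.independent (monomials n)"
proof (rule bpoly.independent_if_scalars_zero[OF finite_monomials])
  fix f and x
  assume sum: "(\<Sum>x\<in>monomials n. bscale (f x) x) = 0" and "x \<in> monomials n"
  then obtain i j where ij: "i + j \<le> n" "x = monom (monom 1 i) j"
    by (auto simp: monomials_def)
  have "(\<Sum>x\<in>monomials n. bscale (f x) x) =
      (\<Sum>(i, j)\<in>{(i, j). i + j \<le> n}. monom (monom (f (monom (monom 1 i) j)) i) j)"
    unfolding monomials_def sum.reindex[OF inj_on_subset[OF inj_monomial subset_UNIV]]
    by (intro sum.cong) (auto simp: smult_monom)
  then have "coeff (coeff (\<Sum>x\<in>monomials n. bscale (f x) x) j) i = f x"
    using ij by (simp add: coeff_sum_monomials finite_exponents)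
  then show "f x = 0"
    using sum by simp
qed

lemma independent_total_degree_le_bound:
  assumes "bpoly.independent B" "B \<subseteq> {p. total_degree p \<le> n}"
  shows "finite B" "card B \<le> card (monomials n)"
  using bpoly.independent_span_bound[OF finite_monomials assms(1)] assms(2)
  by (simp_all add: span_monomials)

section \<open>Polynomials vanishing on finite sets\<close>

lemma ex_independent_vanishing:
  assumes "finite T"
  shows "\<exists>B. B \<subseteq> {p. total_degree p \<le> n} \<and> bpoly.independent B \<and>
    card (monomials n) \<le> card B + card T \<and> (\<forall>p\<in>B. \<forall>t\<in>T. eval2 p t = 0)"
  using assms
proof (induction T rule: finite_induct)
  case empty
  show ?case
    by (intro exI[of _ "monomials n"]) (simp add: monomials_subset independent_monomials)
next
  case (insert t T)
  then obtain B where B: "B \<subseteq> {p. total_degree p \<le> n}" "bpoly.independent B"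
    "card (monomials n) \<le> card B + card T" "\<forall>p\<in>B. \<forall>s\<in>T. eval2 p s = 0"
    by blast
  have finB: "finite B"
    using independent_total_degree_le_bound(1)[OF B(2,1)] .
  obtain B' where B': "B' \<subseteq> bpoly.span B" "bpoly.independent B'" "card B \<le> card B' + 1"
    "\<And>p. p \<in> B' \<Longrightarrow> eval2 p t = 0"
    by (rule bpoly.ex_independent_in_kernel[OF finB B(2), of "\<lambda>p. eval2 p t"]) simp_all
  have "bpoly.span B \<subseteq> {p. total_degree p \<le> n}"
    using B(1) by (rule bpoly.span_minimal[OF _ subspace_total_degree_le])
  then have "B' \<subseteq> {p. total_degree p \<le> n}"
    using B'(1) by blast
  have "bpoly.span B \<subseteq> {p. \<forall>s\<in>T. eval2 p s = 0}"
    using B(4) by (intro bpoly.span_minimal[OF _ subspace_vanishing]) blast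
  then have "\<forall>p\<in>B'. \<forall>s\<in>insert t T. eval2 p s = 0"
    using B'(1,4) by blast
  moreover have "card (monomials n) \<le> card B' + card (insert t T)"
    using B'(3) B(3) insert.hyps by simp
  ultimately show ?case
    using B'(2) \<open>B' \<subseteq> {p. total_degree p \<le> n}\<close> by blast
qed

lemma ex_nonzero_vanishing:
  assumes "finite T" "card T < card (monomials n)"
  obtains p where "p \<noteq> 0" "total_degree p \<le> n" "\<And>t. t \<in> T \<Longrightarrow> eval2 p t = 0"
proof -
  obtain B where B: "B \<subseteq> {p. total_degree p \<le> n}" "bpoly.independent B"
    "card (monomials n) \<le> card B + card T" "\<forall>p\<in>B. \<forall>t\<in>T. eval2 p t = 0"
    using ex_independent_vanishing[OF assms(1)] by blast
  have "B \<noteq> {}"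
    using B(3) assms(2) by (intro notI) simp
  then obtain p where p: "p \<in> B"
    by blast
  show ?thesis
  proof (rule that)
    show "p \<noteq> 0"
      using p B(2) bpoly.dependent_zero by blast
    show "total_degree p \<le> n"
      using p B(1) by auto
    show "eval2 p t = 0" if "t \<in> T" for t
      using p B(4) that by auto
  qed
qed

lemma independent_Un_separating:
  assumes "finite T" "finite B" "bpoly.independent B" "\<forall>p\<in>B. \<forall>t\<in>T. eval2 p t = 0"
    and "\<forall>t\<in>T. (\<forall>s\<in>T - {t}. eval2 (L t) s = 0) \<and> eval2 (L t) t \<noteq> 0"
  shows "bpoly.independent (B \<union> L ` T) \<and> card (B \<union> L ` T) = card B + card T"
  using assms
proof (induction T rule: finite_induct)
  case (insert t T)
  have IH: "bpoly.independent (B \<union> L ` T)" "card (B \<union> L ` T) = card B + card T"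
    using insert by auto
  have "B \<union> L ` T \<subseteq> {p. \<forall>s\<in>{t}. eval2 p s = 0}"
    using insert.prems(3,4) insert.hyps(2) by auto
  then have "bpoly.span (B \<union> L ` T) \<subseteq> {p. \<forall>s\<in>{t}. eval2 p s = 0}"
    by (rule bpoly.span_minimal[OF _ subspace_vanishing])
  then have L_t: "L t \<notin> bpoly.span (B \<union> L ` T)"
    using insert.prems(4) by auto
  have "B \<union> L ` insert t T = insert (L t) (B \<union> L ` T)"
    by auto
  moreover have "finite (B \<union> L ` T)"
    using insert.hyps(1) insert.prems(1) by simp
  moreover have "L t \<notin> B \<union> L ` T"
    using L_t bpoly.span_base[of "L t" "B \<union> L ` T"] by blast
  ultimately show ?case
    using IH L_t insert.hyps by (simp add: bpoly.independent_insertI)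
qed simp

lemma card_independent_vanishing_le:
  assumes "finite T" "card T \<le> n + 1"
    and B: "B \<subseteq> {p. total_degree p \<le> n}" "bpoly.independent B" "\<forall>p\<in>B. \<forall>t\<in>T. eval2 p t = 0"
  shows "card B + card T \<le> card (monomials n)"
proof -
  have "\<forall>t\<in>T. \<exists>L. total_degree L \<le> n \<and> (\<forall>s\<in>T - {t}. eval2 L s = 0) \<and> eval2 L t \<noteq> 0"
  proof
    fix t
    assume "t \<in> T"
    obtain L where L: "total_degree L = card (T - {t})" "\<And>s. s \<in> T - {t} \<Longrightarrow> eval2 L s = 0"
      "eval2 L t \<noteq> 0"
      using ex_poly_vanishing_except[of "T - {t}" t] assms(1) by blast
    moreover have "card (T - {t}) \<le> n"
      using assms(1,2) \<open>t \<in> T\<close> by simp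
    ultimately show "\<exists>L. total_degree L \<le> n \<and> (\<forall>s\<in>T - {t}. eval2 L s = 0) \<and> eval2 L t \<noteq> 0"
      by (intro exI[of _ L] conjI ballI) simp_all
  qed
  then obtain L where L: "\<forall>t\<in>T. total_degree (L t) \<le> n \<and> (\<forall>s\<in>T - {t}. eval2 (L t) s = 0) \<and>
      eval2 (L t) t \<noteq> 0"
    by (rule bchoice[THEN exE])
  have "finite B"
    using independent_total_degree_le_bound(1)[OF B(2,1)] .
  then have indep: "bpoly.independent (B \<union> L ` T)" and card_BL: "card (B \<union> L ` T) = card B + card T"
    using independent_Un_separating[OF assms(1) _ B(2,3), of L] L by auto
  have "B \<union> L ` T \<subseteq> {p. total_degree p \<le> n}"
    using B(1) L by auto
  then have "card (B \<union> L ` T) \<le> card (monomials n)"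
    by (rule independent_total_degree_le_bound(2)[OF indep])
  then show ?thesis
    using card_BL by linarith
qed

section \<open>Bezout's bound\<close>

lemma ex_complement_of_multiples:
  assumes "P \<noteq> 0"
  obtains R where "R \<subseteq> {p. total_degree p \<le> total_degree P + m}" "bpoly.independent R"
    "card (monomials (total_degree P + m)) \<le> card R + card (monomials m)"
    "\<And>b. b \<in> bpoly.span R \<Longrightarrow> P dvd b \<Longrightarrow> b = 0"
proof -
  define V where "V = {p. total_degree p \<le> total_degree P + m}"
  define PM where "PM = (*) P ` monomials m"
  have "total_degree (P * a) \<le> total_degree P + m" if "a \<in> monomials m" for a
    using that monomials_subset[of m] total_degree_mult_le[of P a] by auto
  then have PM_V: "PM \<subseteq> V"
    by (auto simp: PM_def V_def)
  have indep_PM: "bpoly.independent PM"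
    unfolding PM_def using assms independent_monomials by (rule independent_image_mult)
  obtain B where B: "PM \<subseteq> B" "B \<subseteq> V" "bpoly.independent B" "V \<subseteq> bpoly.span B"
    by (rule bpoly.maximal_independent_subset_extend[OF PM_V indep_PM])
  have finB: "finite B"
    using independent_total_degree_le_bound(1)[OF B(3)] B(2) by (simp add: V_def)
  show ?thesis
  proof (rule that[of "B - PM"])
    show "B - PM \<subseteq> {p. total_degree p \<le> total_degree P + m}"
      using B(2) by (auto simp: V_def)
    show "bpoly.independent (B - PM)"
      using bpoly.independent_mono[OF B(3)] by blast
    have "card (monomials (total_degree P + m)) \<le> card B"
      using bpoly.independent_span_bound[OF finB independent_monomials] monomials_subset B(4)
      by (auto simp: V_def)
    moreover have "card PM = card (monomials m)"
      unfolding PM_def using assms by (intro card_image) (simp add: inj_on_def)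
    moreover have "card (B - PM) = card B - card PM"
      using B(1) finB by (simp add: card_Diff_subset finite_subset)
    moreover have "card PM \<le> card B"
      using B(1) finB by (rule card_mono[rotated])
    ultimately show "card (monomials (total_degree P + m)) \<le> card (B - PM) + card (monomials m)"
      by linarith
  next
    fix b
    assume b: "b \<in> bpoly.span (B - PM)" "P dvd b"
    obtain c where c: "b = P * c"
      using b(2) by (rule dvdE)
    have "bpoly.span (B - PM) \<subseteq> V"
      unfolding V_def using B(2) by (intro bpoly.span_minimal[OF _ subspace_total_degree_le]) (auto simp: V_def)
    then have "total_degree b \<le> total_degree P + m"
      using b(1) by (auto simp: V_def)
    then have "c \<in> bpoly.span (monomials m)"
      using c assms by (cases "c = 0") (simp_all add: span_monomials total_degree_mult bpoly.span_zero)
    then have "b \<in> bpoly.span PM"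
      unfolding PM_def span_image_mult c by (rule imageI)
    then have "b \<in> bpoly.span PM \<inter> bpoly.span (B - PM)"
      using b(1) by (rule IntI)
    then show "b = 0"
      using bpoly.span_Int_span_Diff[OF B(3,1)] by simp
  qed
qed

lemma ex_independent_multiples:
  assumes "irreducible P" "\<not> P dvd Q"
  obtains B where "B \<subseteq> {p. total_degree p \<le> total_degree Q + total_degree P + m}"
    "bpoly.independent B" "\<And>p. p \<in> B \<Longrightarrow> zero_set P \<inter> zero_set Q \<subseteq> zero_set p"
    "card (monomials (total_degree Q + m)) + card (monomials (total_degree P + m)) \<le>
      card B + card (monomials m)"
proof -
  define e where "e = total_degree P"
  define d where "d = total_degree Q"
  have "P \<noteq> 0" "Q \<noteq> 0"
    using assms by auto
  obtain R where R: "R \<subseteq> {p. total_degree p \<le> e + m}" "bpoly.independent R"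
    "card (monomials (e + m)) \<le> card R + card (monomials m)"
    "\<And>b. b \<in> bpoly.span R \<Longrightarrow> P dvd b \<Longrightarrow> b = 0"
    using ex_complement_of_multiples[OF \<open>P \<noteq> 0\<close>, of m] unfolding e_def by blast
  define X Y where "X = (*) P ` monomials (d + m)" and "Y = (*) Q ` R"
  have indep_X: "bpoly.independent X"
    unfolding X_def using \<open>P \<noteq> 0\<close> independent_monomials by (rule independent_image_mult)
  have span_X_Y: "bpoly.span X \<inter> bpoly.span Y = {0}"
  proof -
    have "v = 0" if v: "v \<in> bpoly.span X" "v \<in> bpoly.span Y" for v
    proof -
      obtain a where a: "v = P * a"
        using v(1) unfolding X_def span_image_mult by blast
      obtain b where b: "v = Q * b" "b \<in> bpoly.span R"
        using v(2) unfolding Y_def span_image_mult by blast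
      have "P dvd Q * b"
        using a b(1) by (metis dvd_triv_left)
      then have "P dvd b"
        using assms irreducible_imp_prime_elem prime_elem_dvd_multD by blast
      then show "v = 0"
        using R(4)[OF b(2)] b(1) by simp
    qed
    then show ?thesis
      using bpoly.span_zero by blast
  qed
  have "X \<inter> Y = {}"
  proof -
    have "X \<inter> Y \<subseteq> {0}"
      using span_X_Y bpoly.span_superset by blast
    moreover have "0 \<notin> X"
      using indep_X bpoly.dependent_zero by blast
    ultimately show ?thesis
      by blast
  qed
  moreover have "finite R"
    using independent_total_degree_le_bound(1)[OF R(2,1)] .
  ultimately have "card (X \<union> Y) = card (monomials (d + m)) + card R"
    using \<open>P \<noteq> 0\<close> \<open>Q \<noteq> 0\<close> finite_monomials
    by (simp add: X_def Y_def card_Un_disjoint card_image inj_on_def)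
  show ?thesis
  proof (rule that[of "X \<union> Y"])
    have "total_degree (P * a) \<le> d + e + m" if "a \<in> monomials (d + m)" for a
      using that monomials_subset[of "d + m"] total_degree_mult_le[of P a] by (auto simp: e_def)
    moreover have "total_degree (Q * b) \<le> d + e + m" if "b \<in> R" for b
      using that R(1) total_degree_mult_le[of Q b] by (auto simp: d_def)
    ultimately show "X \<union> Y \<subseteq> {p. total_degree p \<le> total_degree Q + total_degree P + m}"
      by (auto simp: X_def Y_def d_def e_def)
    show "bpoly.independent (X \<union> Y)"
      using indep_X independent_image_mult[OF \<open>Q \<noteq> 0\<close> R(2)] span_X_Y
      unfolding Y_def by (rule bpoly.independent_Un_if_span_Int)
    show "zero_set P \<inter> zero_set Q \<subseteq> zero_set p" if "p \<in> X \<union> Y" for p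
      using that by (auto simp: X_def Y_def zero_set_def)
    show "card (monomials (total_degree Q + m)) + card (monomials (total_degree P + m)) \<le>
        card (X \<union> Y) + card (monomials m)"
      using \<open>card (X \<union> Y) = card (monomials (d + m)) + card R\<close> R(3) by (simp add: d_def e_def)
  qed
qed

lemma card_common_zeros_le:
  assumes "irreducible P" "\<not> P dvd Q" "finite T" "T \<subseteq> zero_set P \<inter> zero_set Q"
  shows "card T \<le> total_degree P * total_degree Q"
proof -
  define e where "e = total_degree P"
  define d where "d = total_degree Q"
  define m where "m = card T"
  obtain B where B: "B \<subseteq> {p. total_degree p \<le> d + e + m}" "bpoly.independent B"
    "\<And>p. p \<in> B \<Longrightarrow> zero_set P \<inter> zero_set Q \<subseteq> zero_set p"
    "card (monomials (d + m)) + card (monomials (e + m)) \<le> card B + card (monomials m)"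
    using ex_independent_multiples[OF assms(1,2), of m] unfolding d_def e_def by blast
  have "\<forall>p\<in>B. \<forall>t\<in>T. eval2 p t = 0"
    using B(3) assms(4) by (auto simp: zero_set_def)
  then have "card B + m \<le> card (monomials (d + e + m))"
    using card_independent_vanishing_le[OF assms(3) _ B(1,2)] by (simp add: m_def)
  with B(4) have "(d + m + 1) * (d + m + 2) + (e + m + 1) * (e + m + 2) + 2 * m \<le>
      (d + e + m + 1) * (d + e + m + 2) + (m + 1) * (m + 2)"
    using card_monomials[of "d + m"] card_monomials[of "e + m"] card_monomials[of "d + e + m"]
      card_monomials[of m]
    by linarith
  then show ?thesis
    by (simp add: e_def d_def m_def algebra_simps)
qed

theorem bezout_bound:
  assumes "irreducible P" "\<not> P dvd Q"
  shows "finite (zero_set P \<inter> zero_set Q)"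
    and "card (zero_set P \<inter> zero_set Q) \<le> total_degree P * total_degree Q"
proof -
  show fin: "finite (zero_set P \<inter> zero_set Q)"
  proof (rule ccontr)
    assume "infinite (zero_set P \<inter> zero_set Q)"
    then obtain T where "finite T" "card T = total_degree P * total_degree Q + 1"
      "T \<subseteq> zero_set P \<inter> zero_set Q"
      using infinite_arbitrarily_large by blast
    with card_common_zeros_le[OF assms] show False
      by fastforce
  qed
  show "card (zero_set P \<inter> zero_set Q) \<le> total_degree P * total_degree Q"
    using card_common_zeros_le[OF assms fin] by simp
qed

lemma zero_set_mult: "zero_set (P * Q) = zero_set P \<union> zero_set Q"
  by (auto simp: zero_set_def)

lemma algebraic_curve_zero_set: "1 \<le> total_degree P \<Longrightarrow> algebraic_curve (zero_set P)"
  by (auto simp: algebraic_curve_def)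

lemma curve_degree_zero_set_le: "1 \<le> total_degree P \<Longrightarrow> curve_degree (zero_set P) \<le> total_degree P"
  unfolding curve_degree_def by (rule Least_le) blast

lemma curve_degree_attained:
  assumes "algebraic_curve X"
  obtains P where "total_degree P = curve_degree X" "1 \<le> total_degree P" "X = zero_set P"
proof -
  obtain P0 where "1 \<le> total_degree P0" "X = zero_set P0"
    using assms by (auto simp: algebraic_curve_def)
  then have "\<exists>P. total_degree P = curve_degree X \<and> 1 \<le> total_degree P \<and> X = zero_set P"
    unfolding curve_degree_def by (rule_tac LeastI_ex) blast
  then show ?thesis
    using that by blast
qed

lemma card_Int_curve_le:
  assumes "irreducible P" "S \<subseteq> zero_set P" "algebraic_curve X" "\<not> S \<subseteq> X"
  shows "card (S \<inter> X) \<le> total_degree P * curve_degree X"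
proof -
  obtain Q where Q: "total_degree Q = curve_degree X" "X = zero_set Q"
    using curve_degree_attained[OF assms(3)] by metis
  have "\<not> P dvd Q"
  proof
    assume "P dvd Q"
    then obtain R where "Q = P * R"
      by (rule dvdE)
    then show False
      using assms(2,4) Q(2) zero_set_mult by blast
  qed
  have "S \<inter> X \<subseteq> zero_set P \<inter> zero_set Q"
    using assms(2) Q(2) by blast
  then have "card (S \<inter> X) \<le> card (zero_set P \<inter> zero_set Q)"
    using bezout_bound(1)[OF assms(1) \<open>\<not> P dvd Q\<close>] by (rule card_mono[rotated])
  also have "\<dots> \<le> total_degree P * curve_degree X"
    using bezout_bound(2)[OF assms(1) \<open>\<not> P dvd Q\<close>] Q(1) by simp
  finally show ?thesis .
qed

section \<open>Point sets with few points on every curve\<close>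

lemma powr_add_le_mult_powr_iff:
  fixes a b c x :: real
  assumes "0 < b" "0 < x" "0 \<le> c"
  shows "x powr (a + b) \<le> c * x powr a \<longleftrightarrow> x \<le> c powr (1 / b)"
proof -
  have "x powr (a + b) \<le> c * x powr a \<longleftrightarrow> x powr b \<le> c"
    using assms(2) by (simp add: powr_add mult.commute)
  also have "\<dots> \<longleftrightarrow> x \<le> c powr (1 / b)"
  proof
    assume "x powr b \<le> c"
    then have "(x powr b) powr (1 / b) \<le> c powr (1 / b)"
      using assms by (intro powr_mono2) auto
    then show "x \<le> c powr (1 / b)"
      using assms by (simp add: powr_powr)
  next
    assume "x \<le> c powr (1 / b)"
    then have "x powr b \<le> (c powr (1 / b)) powr b"
      using assms by (intro powr_mono2) auto
    then show "x powr b \<le> c"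
      using assms by (simp add: powr_powr powr_one)
  qed
  finally show ?thesis .
qed

definition least_vanishing_poly :: "(complex \<times> complex) set \<Rightarrow> complex poly poly \<Rightarrow> bool" where
  "least_vanishing_poly S P \<longleftrightarrow> 1 \<le> total_degree P \<and> S \<subseteq> zero_set P \<and>
     (\<forall>Q. 1 \<le> total_degree Q \<and> S \<subseteq> zero_set Q \<longrightarrow> total_degree P \<le> total_degree Q)"

locale curve_incidence_bound =
  fixes S :: "(complex \<times> complex) set" and A \<alpha> :: real
  assumes infinite_S: "infinite S" and A_ge_1: "1 \<le> A" and alpha_pos: "0 < \<alpha>"
    and bound: "\<And>X. algebraic_curve X \<Longrightarrow> \<not> S \<subseteq> X \<Longrightarrow>
      finite (S \<inter> X) \<and> real (card (S \<inter> X)) \<le> A * real (curve_degree X) powr \<alpha>"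
begin

lemma bound_zero_set:
  assumes "1 \<le> total_degree Q" "total_degree Q \<le> k" "\<not> S \<subseteq> zero_set Q"
  shows "finite (S \<inter> zero_set Q)" "real (card (S \<inter> zero_set Q)) \<le> A * real k powr \<alpha>"
proof -
  have "real (curve_degree (zero_set Q)) powr \<alpha> \<le> real k powr \<alpha>"
    using curve_degree_zero_set_le[OF assms(1)] assms(2) alpha_pos by (intro powr_mono2) auto
  then show "finite (S \<inter> zero_set Q)" "real (card (S \<inter> zero_set Q)) \<le> A * real k powr \<alpha>"
    using bound[OF algebraic_curve_zero_set[OF assms(1)] assms(3)] A_ge_1
    by (auto intro: order.trans mult_left_mono)
qed

lemma one_le_alpha: "1 \<le> \<alpha>"
proof (rule ccontr)
  assume "\<not> 1 \<le> \<alpha>"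
  obtain d :: nat where d: "A powr (1 / (1 - \<alpha>)) < real d"
    using reals_Archimedean2 by blast
  moreover have "0 < A powr (1 / (1 - \<alpha>))"
    using A_ge_1 by simp
  ultimately have "0 < real d"
    by linarith
  then have "0 < d"
    by simp
  with d have "A * real d powr \<alpha> < real d powr (\<alpha> + (1 - \<alpha>))"
    using powr_add_le_mult_powr_iff[of "1 - \<alpha>" "real d" A \<alpha>] \<open>\<not> 1 \<le> \<alpha>\<close> A_ge_1 by auto
  then have lt: "A * real d powr \<alpha> < real d"
    by simp
  obtain P where "total_degree P = d" "\<not> S \<subseteq> zero_set P"
    "finite (S \<inter> zero_set P) \<Longrightarrow> d \<le> card (S \<inter> zero_set P)"
    using ex_lines_through_points_infinite[OF infinite_S] by metis
  with bound_zero_set[of P d] \<open>0 < d\<close> lt show False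
    by fastforce
qed

lemma ex_curve_containing:
  assumes "1 \<le> k" "A * real k powr \<alpha> < real (card (monomials k)) - 1"
  obtains Q where "1 \<le> total_degree Q" "total_degree Q \<le> k" "S \<subseteq> zero_set Q"
proof -
  have "0 \<le> A * real k powr \<alpha>"
    using A_ge_1 by simp
  then have "2 \<le> card (monomials k)"
    using assms(2) by linarith
  obtain T where T: "finite T" "card T = card (monomials k) - 1" "T \<subseteq> S"
    using infinite_arbitrarily_large[OF infinite_S] by blast
  have "card T < card (monomials k)"
    using T(2) \<open>2 \<le> card (monomials k)\<close> by simp
  then obtain Q where Q: "Q \<noteq> 0" "total_degree Q \<le> k" "\<And>t. t \<in> T \<Longrightarrow> eval2 Q t = 0"
    using ex_nonzero_vanishing[OF T(1)] by blast
  have "T \<noteq> {}"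
    using T(2) \<open>2 \<le> card (monomials k)\<close> by (intro notI) simp
  then obtain t where "t \<in> T"
    by blast
  then have Q_pos: "1 \<le> total_degree Q"
    using total_degree_pos_if_root Q(1,3) by blast
  have "S \<subseteq> zero_set Q"
  proof (rule ccontr)
    assume "\<not> S \<subseteq> zero_set Q"
    note fin_card = bound_zero_set[OF Q_pos Q(2) this]
    have "T \<subseteq> S \<inter> zero_set Q"
      using T(3) Q(3) by (auto simp: zero_set_def)
    then have "card T \<le> card (S \<inter> zero_set Q)"
      using fin_card(1) by (rule card_mono[rotated])
    with fin_card(2) T(2) assms(2) \<open>2 \<le> card (monomials k)\<close> show False
      by linarith
  qed
  with Q_pos Q(2) show ?thesis
    using that by blast
qed

lemma ex_least_vanishing_poly:
  assumes "\<alpha> < 2"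
  obtains P where "least_vanishing_poly S P"
proof -
  obtain d :: nat where d: "(2 * A) powr (1 / (2 - \<alpha>)) < real d"
    using reals_Archimedean2 by blast
  moreover have "0 < (2 * A) powr (1 / (2 - \<alpha>))"
    using A_ge_1 by simp
  ultimately have "0 < real d"
    by linarith
  then have "2 * A * real d powr \<alpha> < real d powr (\<alpha> + (2 - \<alpha>))"
    using d powr_add_le_mult_powr_iff[of "2 - \<alpha>" "real d" "2 * A" \<alpha>] assms A_ge_1 by auto
  also have "\<dots> = real d * real d"
    using \<open>0 < real d\<close> by (simp add: power2_eq_square)
  also have "\<dots> < 2 * (real (card (monomials d)) - 1)"
    using card_monomials_real[of d] \<open>0 < real d\<close> by (simp add: algebra_simps)
  finally have "A * real d powr \<alpha> < real (card (monomials d)) - 1"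
    by simp
  moreover have "1 \<le> d"
    using \<open>0 < real d\<close> by simp
  ultimately obtain Q where Q: "1 \<le> total_degree Q" "total_degree Q \<le> d" "S \<subseteq> zero_set Q"
    using ex_curve_containing by blast
  have "\<exists>P. (1 \<le> total_degree P \<and> S \<subseteq> zero_set P) \<and>
      (\<forall>Q. 1 \<le> total_degree Q \<and> S \<subseteq> zero_set Q \<longrightarrow> total_degree P \<le> total_degree Q)"
    using Q by (intro ex_has_least_nat[where m = total_degree]) simp
  then show ?thesis
    using that unfolding least_vanishing_poly_def by blast
qed

lemma least_vanishing_poly_irreducible:
  assumes "least_vanishing_poly S P"
  shows "irreducible P"
proof (rule irreducibleI)
  have P: "1 \<le> total_degree P" "S \<subseteq> zero_set P"
    and min: "\<And>Q. 1 \<le> total_degree Q \<Longrightarrow> S \<subseteq> zero_set Q \<Longrightarrow> total_degree P \<le> total_degree Q"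
    using assms by (auto simp: least_vanishing_poly_def)
  show "P \<noteq> 0"
    using P(1) by auto
  then show "\<not> is_unit P"
    using P(1) total_degree_eq_0_iff_unit[of P] by simp
  have finite_factor: "finite (S \<inter> zero_set f)"
    if "1 \<le> total_degree f" "total_degree f < total_degree P" for f
  proof -
    have "\<not> S \<subseteq> zero_set f"
    proof
      assume "S \<subseteq> zero_set f"
      from min[OF that(1) this] that(2) show False
        by simp
    qed
    then show ?thesis
      by (rule bound_zero_set(1)[OF that(1) order_refl])
  qed
  fix a b
  assume ab: "P = a * b"
  show "is_unit a \<or> is_unit b"
  proof (rule ccontr)
    assume nonunit: "\<not> (is_unit a \<or> is_unit b)"
    have "a \<noteq> 0" "b \<noteq> 0"
      using ab \<open>P \<noteq> 0\<close> by auto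
    then have "total_degree a \<noteq> 0" "total_degree b \<noteq> 0"
      using nonunit total_degree_eq_0_iff_unit by simp_all
    moreover have "total_degree a + total_degree b = total_degree P"
      using ab total_degree_mult[OF \<open>a \<noteq> 0\<close> \<open>b \<noteq> 0\<close>] by simp
    ultimately have "finite (S \<inter> zero_set a)" "finite (S \<inter> zero_set b)"
      by (intro finite_factor; linarith)+
    moreover have "S = (S \<inter> zero_set a) \<union> (S \<inter> zero_set b)"
      using P(2) ab zero_set_mult by blast
    ultimately show False
      using infinite_S finite_Un by metis
  qed
qed

lemma least_vanishing_poly_degree_le:
  assumes "\<alpha> < 2" "least_vanishing_poly S P"
  shows "real (total_degree P) \<le> (2 * A) powr (1 / (2 - \<alpha>))"
proof -
  have P: "1 \<le> total_degree P"
    and min: "\<And>Q. 1 \<le> total_degree Q \<Longrightarrow> S \<subseteq> zero_set Q \<Longrightarrow> total_degree P \<le> total_degree Q"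
    using assms(2) by (auto simp: least_vanishing_poly_def)
  define e where "e = real (total_degree P)"
  have "e * e \<le> 2 * (A * e powr \<alpha>)"
  proof (cases "total_degree P = 1")
    case True
    then show ?thesis
      using A_ge_1 by (simp add: e_def)
  next
    case False
    define k where "k = total_degree P - 1"
    have "1 \<le> k" "k < total_degree P" "real k = e - 1"
      using False P by (auto simp: k_def e_def)
    have "\<not> A * real k powr \<alpha> < real (card (monomials k)) - 1"
    proof
      assume "A * real k powr \<alpha> < real (card (monomials k)) - 1"
      then obtain Q where "1 \<le> total_degree Q" "total_degree Q \<le> k" "S \<subseteq> zero_set Q"
        using ex_curve_containing[OF \<open>1 \<le> k\<close>] by blast
      with min \<open>k < total_degree P\<close> show False
        by fastforce
    qed
    moreover have "2 * real (card (monomials k)) = e * e + e"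
      using card_monomials_real[of k] \<open>real k = e - 1\<close> by (simp add: algebra_simps)
    moreover have "A * real k powr \<alpha> \<le> A * e powr \<alpha>"
      using alpha_pos A_ge_1 \<open>real k = e - 1\<close> by (intro mult_left_mono powr_mono2) auto
    moreover have "2 \<le> e"
      using \<open>1 \<le> k\<close> \<open>real k = e - 1\<close> by simp
    ultimately show ?thesis
      by linarith
  qed
  moreover have "e powr (\<alpha> + (2 - \<alpha>)) = e * e"
    using P by (simp add: e_def power2_eq_square)
  ultimately have "e powr (\<alpha> + (2 - \<alpha>)) \<le> 2 * A * e powr \<alpha>"
    by simp
  then show ?thesis
    using powr_add_le_mult_powr_iff[of "2 - \<alpha>" e "2 * A" \<alpha>] assms(1) P A_ge_1
    by (simp add: e_def)
qed

end

theorem proposition5p1: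
  fixes S :: "(complex \<times> complex) set" and A \<alpha> :: real
  assumes "infinite S" and "A \<ge> 1" and "0 < \<alpha>" and "\<alpha> < 2"
    and bound: "\<And>X. algebraic_curve X \<Longrightarrow> \<not> S \<subseteq> X \<Longrightarrow>
        finite (S \<inter> X) \<and> real (card (S \<inter> X)) \<le> A * real (curve_degree X) powr \<alpha>"
  shows "\<alpha> \<ge> 1
    \<and> (\<exists>Y. irreducible_curve Y \<and> S \<subseteq> Y \<and> real (curve_degree Y) \<le> (2 * A) powr (1 / (2 - \<alpha>)))
    \<and> (\<forall>X. algebraic_curve X \<and> \<not> S \<subseteq> X \<longrightarrow>
        finite (S \<inter> X) \<and> real (card (S \<inter> X)) \<le> (2 * A) powr (1 / (2 - \<alpha>)) * real (curve_degree X))"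
proof -
  interpret curve_incidence_bound S A \<alpha>
    using assms by unfold_locales
  obtain P where P: "least_vanishing_poly S P"
    using ex_least_vanishing_poly[OF \<open>\<alpha> < 2\<close>] by blast
  then have P_pos: "1 \<le> total_degree P" and S_P: "S \<subseteq> zero_set P"
    by (simp_all add: least_vanishing_poly_def)
  have irr: "irreducible P"
    using P by (rule least_vanishing_poly_irreducible)
  have deg: "real (total_degree P) \<le> (2 * A) powr (1 / (2 - \<alpha>))"
    using \<open>\<alpha> < 2\<close> P by (rule least_vanishing_poly_degree_le)
  have "irreducible_curve (zero_set P)"
    using irr P_pos by (auto simp: irreducible_curve_def)
  moreover have "real (curve_degree (zero_set P)) \<le> (2 * A) powr (1 / (2 - \<alpha>))"
    using curve_degree_zero_set_le[OF P_pos] deg by linarith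
  moreover have "real (card (S \<inter> X)) \<le> (2 * A) powr (1 / (2 - \<alpha>)) * real (curve_degree X)"
    if "algebraic_curve X" "\<not> S \<subseteq> X" for X
  proof -
    have "real (card (S \<inter> X)) \<le> real (total_degree P) * real (curve_degree X)"
      using card_Int_curve_le[OF irr S_P that] by (simp flip: of_nat_mult)
    then show ?thesis
      using deg by (meson mult_right_mono of_nat_0_le_iff order_trans)
  qed
  ultimately show ?thesis
    using one_le_alpha S_P bound by (intro conjI exI[of _ "zero_set P"] allI impI) auto
qed

end
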